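(* Let $\mathbf{A}$ be a 5-dimensional LV algebra with natural basis $e_1,\dots,e_5$ such that $e_ie_j\neq\frac12(e_i+e_j)$ for $\{i,j\}\in\{\{1,2\},\{2,3\},\{3,4\},\{4,5\},\{1,5\}\}$ and $e_ie_j=\frac12(e_i+e_j)$ for $\{i,j\}\in\{\{1,3\},\{1,4\},\{2,4\},\{2,5\},\{3,5\}\}$. Then $\mathrm{Der}(\mathbf{A})=\{0\}$.
   Context: Let $\mathbb{F}$ be a field of characteristic different from $2$. A Lotka–Volterra (LV) algebra of dimension $5$ over $\mathbb{F}$ is a commutative (not necessarily associative) $\mathbb{F}$-algebra $\mathbf{A}$ with a basis $e_1,\dots,e_5$ (the natural basis) such that $e_ie_j=\alpha_{ij}e_i+\alpha_{ji}e_j$ with $\alpha_{ij}\in\mathbb{F}$, $\alpha_{ii}=\frac12$ and $\alpha_{ij}+\alpha_{ji}=1$ for all $i,j$. A derivation is a linear map $D:\mathbf{A}\to\mathbf{A}$ with $D(uv)=D(u)v+uD(v)$ for all $u,v$; $\mathrm{Der}(\mathbf{A})$ is the set of derivations. *)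

theory Defs
  imports Main
begin

datatype idx5 = I1 | I2 | I3 | I4 | I5

lemma UNIV_idx5: "(UNIV :: idx5 set) = {I1, I2, I3, I4, I5}"
  by (auto intro: idx5.exhaust)

instance idx5 :: finite
  by standard (simp add: UNIV_idx5)

text \<open>Elements of the algebra are coordinate vectors w.r.t. the natural basis.\<close>
type_synonym 'a vec5 = "idx5 \<Rightarrow> 'a"

definition basis5 :: "idx5 \<Rightarrow> 'a::field vec5" where
  "basis5 i = (\<lambda>k. if k = i then 1 else 0)"

definition vadd :: "'a::field vec5 \<Rightarrow> 'a vec5 \<Rightarrow> 'a vec5" where
  "vadd u v = (\<lambda>k. u k + v k)"

definition vscale :: "'a::field \<Rightarrow> 'a vec5 \<Rightarrow> 'a vec5" where
  "vscale c u = (\<lambda>k. c * u k)"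

text \<open>Structure constants: the k-th coordinate of e_i e_j = alpha i j e_i + alpha j i e_j.\<close>
definition lv_mult :: "(idx5 \<Rightarrow> idx5 \<Rightarrow> 'a::field) \<Rightarrow> 'a vec5 \<Rightarrow> 'a vec5 \<Rightarrow> 'a vec5" where
  "lv_mult \<alpha> u v = (\<lambda>k. \<Sum>i\<in>UNIV. \<Sum>j\<in>UNIV. u i * v j *
      ((if k = i then \<alpha> i j else 0) + (if k = j then \<alpha> j i else 0)))"

definition is_LV :: "(idx5 \<Rightarrow> idx5 \<Rightarrow> 'a::field) \<Rightarrow> bool" where
  "is_LV \<alpha> \<longleftrightarrow> (\<forall>i. \<alpha> i i = inverse 2) \<and> (\<forall>i j. \<alpha> i j + \<alpha> j i = 1)"

definition is_linear5 :: "('a::field vec5 \<Rightarrow> 'a vec5) \<Rightarrow> bool" where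
  "is_linear5 D \<longleftrightarrow> (\<forall>u v. D (vadd u v) = vadd (D u) (D v)) \<and>
                      (\<forall>c u. D (vscale c u) = vscale c (D u))"

definition is_derivation :: "(idx5 \<Rightarrow> idx5 \<Rightarrow> 'a::field) \<Rightarrow> ('a vec5 \<Rightarrow> 'a vec5) \<Rightarrow> bool" where
  "is_derivation \<alpha> D \<longleftrightarrow> is_linear5 D \<and>
     (\<forall>u v. D (lv_mult \<alpha> u v) = vadd (lv_mult \<alpha> (D u) v) (lv_mult \<alpha> u (D v)))"

definition Der :: "(idx5 \<Rightarrow> idx5 \<Rightarrow> 'a::field) \<Rightarrow> ('a vec5 \<Rightarrow> 'a vec5) set" where
  "Der \<alpha> = {D. is_derivation \<alpha> D}"

end

theory Submission
  imports Defs
begin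

text \<open>
  Evaluating the Leibniz rule on products of basis vectors gives, coordinatewise, a linear system
  for the matrix entries \<open>D(e\<^sub>i)\<^sub>k\<close>. Squaring \<open>e\<^sub>i\<close> kills \<open>D(e\<^sub>i)\<^sub>k\<close> whenever
  \<open>\<alpha>\<^sub>k\<^sub>i \<noteq> 1/2\<close>; a product \<open>e\<^sub>i e\<^sub>j\<close> with \<open>\<alpha>\<^sub>i\<^sub>j \<noteq> \<alpha>\<^sub>k\<^sub>j\<close> transfers the vanishing of
  \<open>D(e\<^sub>j)\<^sub>k\<close> to \<open>D(e\<^sub>i)\<^sub>k\<close>; and once all off-diagonal entries of a column vanish, squaring
  kills the diagonal one too. In the given pentagon every coordinate pair \<open>(i, k)\<close> is either a side,
  where the first rule applies, or a diagonal, where a common neighbour \<open>j\<close> of \<open>k\<close> on the pentagon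
  that is joined to \<open>i\<close> by a diagonal makes the second rule applicable.
\<close>

lemma sum_idx5: "(\<Sum>i\<in>UNIV. f i) = f I1 + f I2 + f I3 + f I4 + (f I5 :: 'a::comm_monoid_add)"
  by (simp add: UNIV_idx5 add.assoc)

lemma ex_idx5: "(\<exists>i. P i) \<longleftrightarrow> P I1 \<or> P I2 \<or> P I3 \<or> P I4 \<or> P I5"
  by (metis idx5.exhaust)

lemma vec5_eq_sum_basis:
  "u = vadd (vscale (u I1) (basis5 I1)) (vadd (vscale (u I2) (basis5 I2))
     (vadd (vscale (u I3) (basis5 I3)) (vadd (vscale (u I4) (basis5 I4)) (vscale (u I5) (basis5 I5)))))"
  by (rule ext, case_tac x) (simp_all add: vadd_def vscale_def basis5_def)

lemma sum_mult_basis5: "(\<Sum>j\<in>UNIV. c j * basis5 i j) = (c i :: 'a::field)"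
  unfolding basis5_def by (simp add: if_distrib cong: if_cong)

lemma lv_mult_apply:
  "lv_mult \<alpha> u v k = u k * (\<Sum>j\<in>UNIV. \<alpha> k j * v j) + v k * (\<Sum>i\<in>UNIV. \<alpha> k i * u i)"
  unfolding lv_mult_def sum_idx5 by (cases k) (simp_all add: algebra_simps)

lemma lv_mult_basis:
  "lv_mult \<alpha> (basis5 i) (basis5 j) = vadd (vscale (\<alpha> i j) (basis5 i)) (vscale (\<alpha> j i) (basis5 j))"
  by (rule ext) (simp add: lv_mult_apply sum_mult_basis5, simp add: vadd_def vscale_def basis5_def)

lemma is_LV_diag: "is_LV \<alpha> \<Longrightarrow> \<alpha> i i = inverse 2"
  by (simp add: is_LV_def)

lemma is_LV_flip: "is_LV \<alpha> \<Longrightarrow> \<alpha> j i = 1 - \<alpha> i j"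
  unfolding is_LV_def by (metis add_diff_cancel_left')

lemma is_LV_two_neq_zero:
  assumes "is_LV (\<alpha> :: idx5 \<Rightarrow> idx5 \<Rightarrow> 'a::field)"
  shows "(2::'a) \<noteq> 0"
proof
  assume "(2::'a) = 0"
  moreover have "\<alpha> I1 I1 + \<alpha> I1 I1 = 1" using assms by (simp add: is_LV_def)
  ultimately show False using is_LV_diag[OF assms] by simp
qed

lemma is_LV_flip_half_iff:
  assumes "is_LV (\<alpha> :: idx5 \<Rightarrow> idx5 \<Rightarrow> 'a::field)"
  shows "\<alpha> j i = inverse 2 \<longleftrightarrow> \<alpha> i j = inverse 2"
proof -
  have "1 - inverse 2 = (inverse 2 :: 'a)"
    using is_LV_two_neq_zero[OF assms] by (simp add: field_simps)
  then show ?thesis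
    using is_LV_flip[OF assms, of i j] is_LV_flip[OF assms, of j i] by auto
qed

lemma lv_mult_basis_eq_midpoint_iff:
  assumes LV: "is_LV (\<alpha> :: idx5 \<Rightarrow> idx5 \<Rightarrow> 'a::field)" and "i \<noteq> j"
  shows "lv_mult \<alpha> (basis5 i) (basis5 j) = vscale (inverse 2) (vadd (basis5 i) (basis5 j))
         \<longleftrightarrow> \<alpha> i j = inverse 2"
proof
  assume "lv_mult \<alpha> (basis5 i) (basis5 j) = vscale (inverse 2) (vadd (basis5 i) (basis5 j))"
  then have "lv_mult \<alpha> (basis5 i) (basis5 j) i = vscale (inverse 2) (vadd (basis5 i) (basis5 j)) i"
    by simp
  then show "\<alpha> i j = inverse 2"
    using \<open>i \<noteq> j\<close> unfolding lv_mult_basis by (simp add: vadd_def vscale_def basis5_def)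
next
  assume ij: "\<alpha> i j = inverse 2"
  then have ji: "\<alpha> j i = inverse 2" using is_LV_flip_half_iff[OF LV] by blast
  show "lv_mult \<alpha> (basis5 i) (basis5 j) = vscale (inverse 2) (vadd (basis5 i) (basis5 j))"
    unfolding lv_mult_basis ij ji by (simp add: vadd_def vscale_def distrib_left)
qed

lemma zero_is_derivation: "is_derivation \<alpha> (\<lambda>u k. 0)"
  by (simp add: is_derivation_def is_linear5_def vadd_def vscale_def lv_mult_def)

lemma derivation_eq_zero_if_basis:
  assumes "is_derivation \<alpha> D" and "\<And>i. D (basis5 i) = (\<lambda>k. 0)"
  shows "D = (\<lambda>u k. 0)"
proof
  fix u :: "'a vec5"
  have "is_linear5 D" using assms(1) by (simp add: is_derivation_def)
  then have "D (vadd (vscale (u I1) (basis5 I1)) (vadd (vscale (u I2) (basis5 I2))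
      (vadd (vscale (u I3) (basis5 I3)) (vadd (vscale (u I4) (basis5 I4)) (vscale (u I5) (basis5 I5))))))
      = (\<lambda>k. 0)"
    by (simp add: is_linear5_def assms(2) vadd_def vscale_def)
  then show "D u = (\<lambda>k. 0)" by (simp flip: vec5_eq_sum_basis)
qed

lemma derivation_basis_apply:
  assumes "is_derivation \<alpha> D"
  shows "\<alpha> i j * D (basis5 i) k + \<alpha> j i * D (basis5 j) k =
     D (basis5 i) k * \<alpha> k j + (if k = j then (\<Sum>m\<in>UNIV. \<alpha> j m * D (basis5 i) m) else 0)
   + (if k = i then (\<Sum>m\<in>UNIV. \<alpha> i m * D (basis5 j) m) else 0) + D (basis5 j) k * \<alpha> k i"
proof -
  have lin: "is_linear5 D"
    and leibniz: "\<And>u v. D (lv_mult \<alpha> u v) = vadd (lv_mult \<alpha> (D u) v) (lv_mult \<alpha> u (D v))"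
    using assms by (auto simp: is_derivation_def)
  have "D (lv_mult \<alpha> (basis5 i) (basis5 j))
      = vadd (vscale (\<alpha> i j) (D (basis5 i))) (vscale (\<alpha> j i) (D (basis5 j)))"
    using lin by (simp add: lv_mult_basis is_linear5_def)
  then have "vadd (vscale (\<alpha> i j) (D (basis5 i))) (vscale (\<alpha> j i) (D (basis5 j))) k
      = vadd (lv_mult \<alpha> (D (basis5 i)) (basis5 j)) (lv_mult \<alpha> (basis5 i) (D (basis5 j))) k"
    by (simp add: leibniz)
  then show ?thesis
    by (simp add: vadd_def vscale_def lv_mult_apply sum_mult_basis5) (simp add: basis5_def algebra_simps)
qed

lemma derivation_basis_offdiag_zero:
  assumes der: "is_derivation \<alpha> D" and LV: "is_LV (\<alpha> :: idx5 \<Rightarrow> idx5 \<Rightarrow> 'a::field)"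
    and "k \<noteq> i" and "\<alpha> k i \<noteq> inverse 2"
  shows "D (basis5 i) k = 0"
proof -
  have two: "(2::'a) \<noteq> 0" using is_LV_two_neq_zero[OF LV] .
  have "inverse 2 * D (basis5 i) k + inverse 2 * D (basis5 i) k
      = D (basis5 i) k * \<alpha> k i + D (basis5 i) k * \<alpha> k i"
    using derivation_basis_apply[OF der, of i i k] \<open>k \<noteq> i\<close> is_LV_diag[OF LV] by simp
  then have "D (basis5 i) k * (1 - 2 * \<alpha> k i) = 0"
    using two by (simp add: field_simps)
  moreover have "1 - 2 * \<alpha> k i \<noteq> 0"
    using \<open>\<alpha> k i \<noteq> inverse 2\<close> two by (auto simp: field_simps)
  ultimately show ?thesis by simp
qed

lemma derivation_basis_transfer_zero:
  assumes der: "is_derivation \<alpha> D" and "i \<noteq> j" "j \<noteq> k" "i \<noteq> k"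
    and "D (basis5 j) k = 0" and "\<alpha> i j \<noteq> \<alpha> k j"
  shows "D (basis5 i) k = 0"
proof -
  have "\<alpha> i j * D (basis5 i) k = D (basis5 i) k * \<alpha> k j"
    using derivation_basis_apply[OF der, of i j k] assms(2-5) by simp
  then have "D (basis5 i) k * (\<alpha> i j - \<alpha> k j) = 0" by (simp add: algebra_simps)
  then show ?thesis using \<open>\<alpha> i j \<noteq> \<alpha> k j\<close> by simp
qed

lemma derivation_basis_diag_zero:
  assumes der: "is_derivation \<alpha> D" and LV: "is_LV (\<alpha> :: idx5 \<Rightarrow> idx5 \<Rightarrow> 'a::field)"
    and offdiag: "\<And>m. m \<noteq> i \<Longrightarrow> D (basis5 i) m = 0"
  shows "D (basis5 i) i = 0"
proof -
  have "(\<Sum>m\<in>UNIV. \<alpha> i m * D (basis5 i) m) = \<alpha> i i * D (basis5 i) i"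
    using offdiag by (subst sum.remove[of UNIV i]) auto
  then have "\<alpha> i i * D (basis5 i) i + \<alpha> i i * D (basis5 i) i
      = D (basis5 i) i * \<alpha> i i + \<alpha> i i * D (basis5 i) i + \<alpha> i i * D (basis5 i) i
        + D (basis5 i) i * \<alpha> i i"
    using derivation_basis_apply[OF der, of i i i] by simp
  then have "2 * (\<alpha> i i * D (basis5 i) i) = 0" by algebra
  moreover have "(2::'a) \<noteq> 0" using is_LV_two_neq_zero[OF LV] .
  moreover from this have "\<alpha> i i \<noteq> 0" unfolding is_LV_diag[OF LV] by simp
  ultimately show ?thesis by simp
qed

lemma Der_eq_zero_if_witnesses:
  assumes LV: "is_LV (\<alpha> :: idx5 \<Rightarrow> idx5 \<Rightarrow> 'a::field)"
    and witness: "\<And>i k. k \<noteq> i \<Longrightarrow> \<alpha> k i \<noteq> inverse 2 \<or>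
                     (\<exists>j. j \<noteq> i \<and> j \<noteq> k \<and> \<alpha> i j = inverse 2 \<and> \<alpha> k j \<noteq> inverse 2)"
  shows "Der \<alpha> = {\<lambda>u k. 0}"
proof -
  have "D = (\<lambda>u k. 0)" if der: "is_derivation \<alpha> D" for D
  proof (rule derivation_eq_zero_if_basis[OF der])
    have offdiag: "D (basis5 i) k = 0" if "k \<noteq> i" for i k
      using witness[OF that]
    proof
      assume "\<alpha> k i \<noteq> inverse 2"
      then show ?thesis using derivation_basis_offdiag_zero[OF der LV that] by blast
    next
      assume "\<exists>j. j \<noteq> i \<and> j \<noteq> k \<and> \<alpha> i j = inverse 2 \<and> \<alpha> k j \<noteq> inverse 2"
      then obtain j where j: "j \<noteq> i" "j \<noteq> k" "\<alpha> i j = inverse 2" "\<alpha> k j \<noteq> inverse 2"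
        by blast
      have "D (basis5 j) k = 0"
        using derivation_basis_offdiag_zero[OF der LV j(2)[symmetric] j(4)] .
      moreover have "\<alpha> i j \<noteq> \<alpha> k j" unfolding j(3) using j(4) by (rule not_sym)
      ultimately show ?thesis
        using derivation_basis_transfer_zero[OF der j(1)[symmetric] j(2) that[symmetric]] by blast
    qed
    show "D (basis5 i) = (\<lambda>k. 0)" for i
    proof
      show "D (basis5 i) k = 0" for k
        using offdiag[of k i] derivation_basis_diag_zero[OF der LV offdiag] by (cases "k = i") auto
    qed
  qed
  then show ?thesis
    unfolding Der_def using zero_is_derivation[of \<alpha>] by blast
qed

theorem mainTheorem15:
  fixes \<alpha> :: "idx5 \<Rightarrow> idx5 \<Rightarrow> 'a::field"
  assumes char: "(2::'a) \<noteq> 0"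
    and LV: "is_LV \<alpha>"
    and ne: "\<forall>(i, j) \<in> {(I1, I2), (I2, I3), (I3, I4), (I4, I5), (I1, I5)}.
               lv_mult \<alpha> (basis5 i) (basis5 j) \<noteq> vscale (inverse 2) (vadd (basis5 i) (basis5 j))"
    and eq: "\<forall>(i, j) \<in> {(I1, I3), (I1, I4), (I2, I4), (I2, I5), (I3, I5)}.
               lv_mult \<alpha> (basis5 i) (basis5 j) = vscale (inverse 2) (vadd (basis5 i) (basis5 j))"
  shows "Der \<alpha> = {(\<lambda>u. (\<lambda>k. 0))}"
proof (rule Der_eq_zero_if_witnesses[OF LV])
  note midpoint = lv_mult_basis_eq_midpoint_iff[OF LV] and flip = is_LV_flip_half_iff[OF LV]
  have side: "\<alpha> i j \<noteq> inverse 2" "\<alpha> j i \<noteq> inverse 2"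
    if "(i, j) \<in> {(I1, I2), (I2, I3), (I3, I4), (I4, I5), (I1, I5)}" for i j
    using bspec[OF ne that] that midpoint[of i j] flip[of i j] by auto
  have diagonal: "\<alpha> i j = inverse 2" "\<alpha> j i = inverse 2"
    if "(i, j) \<in> {(I1, I3), (I1, I4), (I2, I4), (I2, I5), (I3, I5)}" for i j
    using bspec[OF eq that] that midpoint[of i j] flip[of i j] by auto
  note sides = side[of I1 I2, simplified] side[of I2 I3, simplified] side[of I3 I4, simplified]
    side[of I4 I5, simplified] side[of I1 I5, simplified]
  note diagonals = diagonal[of I1 I3, simplified] diagonal[of I1 I4, simplified]
    diagonal[of I2 I4, simplified] diagonal[of I2 I5, simplified] diagonal[of I3 I5, simplified]
  show "\<alpha> k i \<noteq> inverse 2 \<or> (\<exists>j. j \<noteq> i \<and> j \<noteq> k \<and> \<alpha> i j = inverse 2 \<and> \<alpha> k j \<noteq> inverse 2)"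
    if "k \<noteq> i" for i k
    using that by (cases i; cases k) (simp_all add: ex_idx5 sides diagonals)
qed

end
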